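(* Let $K$ be a compact space such that any two points of $K$ are contained in a separable connected compact subset of $K$. If $K$ is almost totally disconnected, then $K$ is homeomorphic to a subspace of $\Sigma[0,1]^\Gamma$ for some set $\Gamma$.
   Context: For a set $\Gamma$, $\Sigma[0,1]^\Gamma$ is the subspace of $[0,1]^\Gamma$ (product topology) of points with countable support, and $\Sigma_0^1[0,1]^\Gamma$ is the subspace of $[0,1]^\Gamma$ consisting of those $x$ with $x_\gamma\in\{0,1\}$ for all but countably many $\gamma$. A compact space is almost totally disconnected if it is homeomorphic to a subspace of $\Sigma_0^1[0,1]^\Gamma$ for some set $\Gamma$. *)

theory Defs
  imports "HOL-Analysis.Analysis"
begin

text \<open>The cube [0,1]^Gamma with the product topology (points are extensional
  functions on Gamma).\<close>
definition cube_top :: "'g set \<Rightarrow> ('g \<Rightarrow> real) topology" where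
  "cube_top \<Gamma> = product_topology (\<lambda>_. top_of_set {0..1}) \<Gamma>"

definition Sigma_cube :: "'g set \<Rightarrow> ('g \<Rightarrow> real) set" where
  "Sigma_cube \<Gamma> = {x \<in> topspace (cube_top \<Gamma>). countable {\<gamma>\<in>\<Gamma>. x \<gamma> \<noteq> 0}}"

definition Sigma01_cube :: "'g set \<Rightarrow> ('g \<Rightarrow> real) set" where
  "Sigma01_cube \<Gamma> = {x \<in> topspace (cube_top \<Gamma>). countable {\<gamma>\<in>\<Gamma>. x \<gamma> \<notin> {0,1}}}"

definition almost_totally_disconnected :: "'a topology \<Rightarrow> 'g itself \<Rightarrow> bool" where
  "almost_totally_disconnected X _ \<longleftrightarrow> compact_space X \<and>
     (\<exists>(\<Gamma>::'g set) S. S \<subseteq> Sigma01_cube \<Gamma> \<and>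
        X homeomorphic_space subtopology (cube_top \<Gamma>) S)"

end

theory Submission
  imports Defs
begin

text \<open>Let \<open>h\<close> embed the space \<open>K\<close> into \<open>\<Sigma>\<^sub>0\<^sup>1[0,1]\<^sup>\<Gamma>\<close>. For a coordinate \<open>\<gamma>\<close> the function
  \<open>z \<mapsto> h z \<gamma>\<close> is continuous, so if it takes only the values 0 and 1 on a dense subset of
  a connected set \<open>C\<close> it is constant on \<open>C\<close>. On a countable dense subset of \<open>C\<close> only
  countably many coordinates leave \<open>{0,1}\<close>; hence two points of a separable connected set,
  and so by hypothesis any two points of \<open>K\<close>, differ in only countably many coordinates.
  Fixing a base point \<open>p = h x\<^sub>0\<close>, the functions \<open>max 0 (h z \<gamma> - p \<gamma>)\<close> and
  \<open>max 0 (p \<gamma> - h z \<gamma>)\<close> then separate points of \<open>K\<close> and, at each point, all but countably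
  many of them vanish, so evaluation at them embeds \<open>K\<close> into \<open>\<Sigma>[0,1]\<^sup>\<Gamma>\<close>.\<close>

lemma topspace_cube_top [simp]: "topspace (cube_top \<Gamma>) = \<Gamma> \<rightarrow>\<^sub>E {0..1}"
  by (simp add: cube_top_def)

lemma continuous_map_cube_coordinate:
  assumes "continuous_map X (cube_top \<Gamma>) h" and "\<gamma> \<in> \<Gamma>"
  shows "continuous_map X euclideanreal (\<lambda>z. h z \<gamma>)"
proof -
  have "continuous_map X (top_of_set {0..1}) (\<lambda>z. h z \<gamma>)"
    using assms continuous_map_product_projection[OF assms(2)] continuous_map_compose[of X _ h]
    unfolding cube_top_def by (fastforce simp: o_def)
  then show ?thesis
    using continuous_map_into_fulltopology by blast
qed

lemma continuous_map_constant_on_connected_closure: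
  assumes q: "continuous_map X euclideanreal q"
    and C: "connectedin X C" "C \<subseteq> X closure_of D"
    and F: "closed F" "countable F" "q ` D \<subseteq> F"
    and "x \<in> C" "y \<in> C"
  shows "q x = q y"
proof -
  have "q ` C \<subseteq> euclideanreal closure_of (q ` D)"
    using continuous_map_image_closure_subset[OF q] C(2) by blast
  also have "\<dots> \<subseteq> F"
    using F by (simp add: closure_minimal)
  finally have "countable (q ` C)"
    using F(2) countable_subset by blast
  moreover have "connected (q ` C)"
    using connectedin_continuous_map_image[OF q C(1)] by simp
  ultimately obtain a where "q ` C \<subseteq> {a}"
    using connected_card_eq_iff_nontrivial by blast
  then show ?thesis
    using \<open>x \<in> C\<close> \<open>y \<in> C\<close> by blast
qed

lemma countable_coordinate_differences:
  assumes h: "continuous_map X (cube_top \<Gamma>) h" and hS: "h ` topspace X \<subseteq> Sigma01_cube \<Gamma>"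
    and C: "connectedin X C" "separable_space (subtopology X C)"
    and "x \<in> C" "y \<in> C"
  shows "countable {\<gamma>\<in>\<Gamma>. h x \<gamma> \<noteq> h y \<gamma>}"
proof -
  have CX: "C \<subseteq> topspace X"
    using C(1) connectedin_subset_topspace by blast
  obtain D where D: "countable D" "D \<subseteq> C" "subtopology X C closure_of D = C"
    using C(2) CX unfolding separable_space_def by (auto simp: Int_absorb1)
  have C_closure: "C \<subseteq> X closure_of D"
    using D(3) closure_of_subtopology_subset[of X C D] by blast
  define A where "A = (\<Union>d\<in>D. {\<gamma>\<in>\<Gamma>. h d \<gamma> \<notin> {0,1}})"
  have "countable A"
    unfolding A_def using D CX hS unfolding Sigma01_cube_def by (intro countable_UN) blast+
  moreover have "h x \<gamma> = h y \<gamma>" if "\<gamma> \<in> \<Gamma>" "\<gamma> \<notin> A" for \<gamma>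
  proof (rule continuous_map_constant_on_connected_closure[where q = "\<lambda>z. h z \<gamma>"])
    show "continuous_map X euclideanreal (\<lambda>z. h z \<gamma>)"
      using continuous_map_cube_coordinate[OF h \<open>\<gamma> \<in> \<Gamma>\<close>] .
    show "(\<lambda>z. h z \<gamma>) ` D \<subseteq> {0,1}"
      using that unfolding A_def by blast
  qed (use C(1) C_closure \<open>x \<in> C\<close> \<open>y \<in> C\<close> in auto)
  then have "{\<gamma>\<in>\<Gamma>. h x \<gamma> \<noteq> h y \<gamma>} \<subseteq> A"
    by blast
  ultimately show ?thesis
    using countable_subset by blast
qed

lemma embedding_map_cube_evaluation:
  assumes "compact_space X"
    and cont: "\<And>f. f \<in> F \<Longrightarrow> continuous_map X (top_of_set {0..1}) f"
    and sep: "\<And>x y. \<lbrakk>x \<in> topspace X; y \<in> topspace X; x \<noteq> y\<rbrakk> \<Longrightarrow> \<exists>f\<in>F. f x \<noteq> f y"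
  shows "embedding_map X (cube_top F) (\<lambda>z. restrict (\<lambda>f. f z) F)"
proof (rule continuous_imp_embedding_map)
  show "continuous_map X (cube_top F) (\<lambda>z. restrict (\<lambda>f. f z) F)"
    unfolding cube_top_def continuous_map_componentwise using cont by auto
  show "Hausdorff_space (cube_top F)"
    unfolding cube_top_def Hausdorff_space_product_topology
    by (simp add: Hausdorff_space_subtopology)
  show "inj_on (\<lambda>z. restrict (\<lambda>f. f z) F) (topspace X)"
  proof (rule inj_onI, rule ccontr)
    fix x y assume "x \<in> topspace X" "y \<in> topspace X" "restrict (\<lambda>f. f x) F = restrict (\<lambda>f. f y) F"
      "x \<noteq> y"
    then show False
      using sep by (metis restrict_apply')
  qed
qed (rule assms(1))

lemma homeomorphic_Sigma_cube_if_countable_deviation: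
  fixes X :: "'a topology" and \<Gamma> :: "'g set"
  assumes "compact_space X"
    and h: "continuous_map X (cube_top \<Gamma>) h" "inj_on h (topspace X)"
    and p: "p \<in> topspace (cube_top \<Gamma>)"
    and countable_dev: "\<And>z. z \<in> topspace X \<Longrightarrow> countable {\<gamma>\<in>\<Gamma>. h z \<gamma> \<noteq> p \<gamma>}"
  shows "\<exists>(\<Gamma>'::('a \<Rightarrow> real) set) S. S \<subseteq> Sigma_cube \<Gamma>' \<and>
           X homeomorphic_space subtopology (cube_top \<Gamma>') S"
proof -
  have hz: "h z \<in> \<Gamma> \<rightarrow>\<^sub>E {0..1}" if "z \<in> topspace X" for z
    using continuous_map_image_subset_topspace[OF h(1)] that by auto
  then have h01: "h z \<gamma> \<in> {0..1}" if "z \<in> topspace X" "\<gamma> \<in> \<Gamma>" for z \<gamma>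
    using that by (meson PiE_mem)
  have p01: "p \<gamma> \<in> {0..1}" if "\<gamma> \<in> \<Gamma>" for \<gamma>
    using p that by (metis PiE_mem topspace_cube_top)
  define pos where "pos = (\<lambda>\<gamma> z. max 0 (h z \<gamma> - p \<gamma>))"
  define neg where "neg = (\<lambda>\<gamma> z. max 0 (p \<gamma> - h z \<gamma>))"
  define F where "F = pos ` \<Gamma> \<union> neg ` \<Gamma>"
  define e where "e = (\<lambda>z. restrict (\<lambda>f. f z) F)"
  have F_cases: "\<exists>\<gamma>\<in>\<Gamma>. f = pos \<gamma> \<or> f = neg \<gamma>" if "f \<in> F" for f
    using that unfolding F_def by blast
  have F_cont: "continuous_map X (top_of_set {0..1}) f" if "f \<in> F" for f
  proof -
    obtain \<gamma> where \<gamma>: "\<gamma> \<in> \<Gamma>" and f: "f = pos \<gamma> \<or> f = neg \<gamma>"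
      using F_cases[OF \<open>f \<in> F\<close>] by blast
    have "continuous_map X euclideanreal f"
      using f continuous_map_cube_coordinate[OF h(1) \<gamma>] unfolding pos_def neg_def
      by (auto intro!: continuous_map_real_max continuous_map_diff)
    moreover have "f ` topspace X \<subseteq> {0..1}"
      using f h01 p01[OF \<gamma>] \<gamma> unfolding pos_def neg_def by fastforce
    ultimately show ?thesis
      by (simp add: continuous_map_in_subtopology image_subset_iff_funcset)
  qed
  have F_sep: "\<exists>f\<in>F. f x \<noteq> f y"
    if "x \<in> topspace X" "y \<in> topspace X" "x \<noteq> y" for x y
  proof -
    have "h x \<noteq> h y"
      using inj_onD[OF h(2) _ that(1,2)] that(3) by blast
    moreover have "h x \<in> extensional \<Gamma>" "h y \<in> extensional \<Gamma>"
      using hz that by (simp_all add: PiE_iff)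
    ultimately obtain \<gamma> where "\<gamma> \<in> \<Gamma>" "h x \<gamma> \<noteq> h y \<gamma>"
      using extensionalityI[of "h x" \<Gamma> "h y"] by blast
    then have "pos \<gamma> x \<noteq> pos \<gamma> y \<or> neg \<gamma> x \<noteq> neg \<gamma> y"
      unfolding pos_def neg_def by (auto simp: max_def)
    then show ?thesis
      using \<open>\<gamma> \<in> \<Gamma>\<close> unfolding F_def by blast
  qed
  have emb: "embedding_map X (cube_top F) e"
    unfolding e_def using assms(1) F_cont F_sep by (rule embedding_map_cube_evaluation)
  have "e z \<in> Sigma_cube F" if z: "z \<in> topspace X" for z
  proof -
    let ?dev = "{\<gamma>\<in>\<Gamma>. h z \<gamma> \<noteq> p \<gamma>}"
    have "f \<in> pos ` ?dev \<union> neg ` ?dev" if "f \<in> F" "e z f \<noteq> 0" for f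
    proof -
      obtain \<gamma> where \<gamma>: "\<gamma> \<in> \<Gamma>" and f: "f = pos \<gamma> \<or> f = neg \<gamma>"
        using F_cases[OF \<open>f \<in> F\<close>] by blast
      have "f z \<noteq> 0"
        using that unfolding e_def by simp
      then have "h z \<gamma> \<noteq> p \<gamma>"
        using f unfolding pos_def neg_def by auto
      with \<gamma> have "\<gamma> \<in> ?dev"
        by simp
      with f show ?thesis
        by blast
    qed
    then have "{f\<in>F. e z f \<noteq> 0} \<subseteq> pos ` ?dev \<union> neg ` ?dev"
      by blast
    moreover have "countable (pos ` ?dev \<union> neg ` ?dev)"
      using countable_dev[OF z] by simp
    ultimately have "countable {f\<in>F. e z f \<noteq> 0}"
      by (rule countable_subset)
    moreover have "e z \<in> F \<rightarrow>\<^sub>E {0..1}"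
      using F_cont z unfolding e_def by (auto simp: continuous_map_in_subtopology)
    ultimately show ?thesis
      unfolding Sigma_cube_def by simp
  qed
  then have "e ` topspace X \<subseteq> Sigma_cube F"
    by blast
  with embedding_map_imp_homeomorphic_space[OF emb] show ?thesis
    by blast
qed

theorem mainTheorem4:
  fixes X :: "'a topology"
  assumes "compact_space X" and "Hausdorff_space X"
    and "\<forall>x\<in>topspace X. \<forall>y\<in>topspace X. \<exists>C. C \<subseteq> topspace X \<and> x \<in> C \<and> y \<in> C \<and>
            compactin X C \<and> connectedin X C \<and> separable_space (subtopology X C)"
    and "almost_totally_disconnected X TYPE('g)"
  shows "\<exists>(\<Gamma>::('a \<Rightarrow> real) set) S. S \<subseteq> Sigma_cube \<Gamma> \<and>
           X homeomorphic_space subtopology (cube_top \<Gamma>) S"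
proof -
  obtain \<Gamma> :: "'g set" and S h k where S: "S \<subseteq> Sigma01_cube \<Gamma>"
    and hk: "homeomorphic_maps X (subtopology (cube_top \<Gamma>) S) h k"
    using assms(4) unfolding almost_totally_disconnected_def homeomorphic_space_def by blast
  have h: "continuous_map X (cube_top \<Gamma>) h" "h ` topspace X \<subseteq> Sigma01_cube \<Gamma>"
    using hk S by (auto simp: homeomorphic_maps_def continuous_map_in_subtopology)
  have h_inj: "inj_on h (topspace X)"
    using hk unfolding homeomorphic_maps_def by (metis inj_on_inverseI)
  obtain p where "p \<in> topspace (cube_top \<Gamma>)"
    and "\<And>z. z \<in> topspace X \<Longrightarrow> countable {\<gamma>\<in>\<Gamma>. h z \<gamma> \<noteq> p \<gamma>}"
  proof (cases "topspace X = {}")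
    case True
    show thesis
      by (rule that[of "restrict (\<lambda>_. 0) \<Gamma>"]) (use True in auto)
  next
    case False
    then obtain x0 where x0: "x0 \<in> topspace X"
      by blast
    have "countable {\<gamma>\<in>\<Gamma>. h z \<gamma> \<noteq> h x0 \<gamma>}" if "z \<in> topspace X" for z
      using assms(3) x0 that countable_coordinate_differences[OF h(1,2)] by blast
    moreover have "h x0 \<in> topspace (cube_top \<Gamma>)"
      using continuous_map_image_subset_topspace[OF h(1)] x0 by blast
    ultimately show thesis
      using that by blast
  qed
  then show ?thesis
    using homeomorphic_Sigma_cube_if_countable_deviation[OF assms(1) h(1) h_inj] by blast
qed

end
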